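(* Let $n\ge 4$ be even, $k=n/2$, and let $G=(V,E)$ be a graph with vertex set $V=\{1,\dots,n\}$, with graph state $|G\rangle$ and stabilizer operators $g_1,\dots,g_n$. Let $T>0$ be an arbitrary (unknown) temperature, $\beta=1/(k_BT)$, and let $\rho_T$ be the $n$-qubit thermal graph state at temperature $T$. Let $0<\epsilon,\delta<1$ and $N=\lceil (2/\epsilon^2)\log(2/\delta)\rceil$. Suppose the observable $S_{1^k0^k}=g_1g_2\cdots g_k$ is measured on each of $N$ independent copies of $\rho_T$, producing outcomes $o_1,\dots,o_N\in\{+1,-1\}$, and set $F_{\rm est}=\frac{1}{N}\sum_{i=1}^N o_i$. Then, with probability at least $1-\delta$, $$\left|\langle G|\rho_T|G\rangle-F_{\rm est}\right|\le \frac{n e^{-4\beta}}{2(1+e^{-2\beta})^n}+\epsilon\le \frac{2}{n}+\epsilon .$$ Moreover, in the limit $N\to\infty$, the inequality $\langle G|\rho_T|G\rangle\ge F_{\rm est}$ holds with probability one.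
   Context: For a graph $G=(V,E)$ on $n$ vertices, the graph state is $|G\rangle=\left(\prod_{(i,j)\in E}CZ_{i,j}\right)|+\rangle^{\otimes n}$, where $|+\rangle=(|0\rangle+|1\rangle)/\sqrt2$ and $CZ_{i,j}$ is the controlled-$Z$ gate on qubits $i,j$. Its stabilizer operators are $g_i=X_i\prod_{j:(i,j)\in E}Z_j$ for $1\le i\le n$, where $X_i,Z_j$ are Pauli operators on the indicated qubits. For $\ell=\ell_1\cdots\ell_n\in\{0,1\}^n$ let $S_\ell=\prod_{i=1}^n g_i^{\ell_i}$; $1^k0^k$ denotes the string of $k$ ones followed by $k$ zeros. Measuring $S_\ell$ on a state $\rho$ means performing the two-outcome projective measurement onto its $\pm1$ eigenspaces, so the outcome has expectation ${\rm Tr}[\rho S_\ell]$. With $\mathcal H=-\sum_{i=1}^n g_i$, the thermal graph state at temperature $T>0$ is $\rho_T=e^{-\beta\mathcal H}/{\rm Tr}[e^{-\beta\mathcal H}]$ with $\beta=1/(k_BT)$, $k_B$ the Boltzmann constant. $\log$ denotes the natural logarithm and $\lceil\cdot\rceil$ the ceiling function. *)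

theory Defs
  imports "Jordan_Normal_Form.Matrix" "HOL-Probability.Probability"
begin

text \<open>n-qubit Hilbert space: basis vectors indexed by b < 2^n; qubit i (1 \<le> i \<le> n)
  corresponds to the i-th tensor factor, i.e. bit (n - i) of b (qubit 1 most significant).\<close>

definition qbit :: "nat \<Rightarrow> nat \<Rightarrow> nat \<Rightarrow> nat" where
  "qbit n i b = (b div 2 ^ (n - i)) mod 2"

definition pauliX :: "nat \<Rightarrow> nat \<Rightarrow> complex Matrix.mat" where
  "pauliX n i = Matrix.mat (2^n) (2^n) (\<lambda>(a, b).
     if qbit n i a \<noteq> qbit n i b \<and> (\<forall>q\<in>{1..n}. q \<noteq> i \<longrightarrow> qbit n q a = qbit n q b)
     then 1 else 0)"

definition pauliZ :: "nat \<Rightarrow> nat \<Rightarrow> complex Matrix.mat" where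
  "pauliZ n i = Matrix.mat (2^n) (2^n) (\<lambda>(a, b). if a = b then (-1) ^ qbit n i a else 0)"

definition CZ :: "nat \<Rightarrow> nat \<Rightarrow> nat \<Rightarrow> complex Matrix.mat" where
  "CZ n i j = Matrix.mat (2^n) (2^n) (\<lambda>(a, b). if a = b then (-1) ^ (qbit n i a * qbit n j a) else 0)"

definition plus_state :: "nat \<Rightarrow> complex Matrix.vec" where
  "plus_state n = Matrix.vec (2^n) (\<lambda>_. complex_of_real (1 / sqrt (2 ^ n)))"

definition mprod_list :: "nat \<Rightarrow> complex Matrix.mat list \<Rightarrow> complex Matrix.mat" where
  "mprod_list d As = foldr (*) As (1\<^sub>m d)"

definition simple_graph :: "nat \<Rightarrow> nat set set \<Rightarrow> bool" where
  "simple_graph n E \<longleftrightarrow> (\<forall>e\<in>E. \<exists>i j. e = {i, j} \<and> i \<noteq> j \<and> i \<in> {1..n} \<and> j \<in> {1..n})"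

definition edge_list :: "nat \<Rightarrow> nat set set \<Rightarrow> (nat \<times> nat) list" where
  "edge_list n E = [(i, j). i \<leftarrow> [1..<n+1], j \<leftarrow> [i+1..<n+1], {i, j} \<in> E]"

definition graph_state :: "nat \<Rightarrow> nat set set \<Rightarrow> complex Matrix.vec" where
  "graph_state n E = mprod_list (2^n) (map (\<lambda>(i, j). CZ n i j) (edge_list n E)) *\<^sub>v plus_state n"

definition stab :: "nat \<Rightarrow> nat set set \<Rightarrow> nat \<Rightarrow> complex Matrix.mat" where
  "stab n E i = pauliX n i * mprod_list (2^n) (map (pauliZ n) (filter (\<lambda>j. {i, j} \<in> E) [1..<n+1]))"

text \<open>S_l = prod_i g_i^{l_i}, with l given as a function {1..n} -> {0,1}.\<close>
definition S_op :: "nat \<Rightarrow> nat set set \<Rightarrow> (nat \<Rightarrow> nat) \<Rightarrow> complex Matrix.mat" where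
  "S_op n E l = mprod_list (2^n) (map (\<lambda>i. stab n E i ^\<^sub>m l i) [1..<n+1])"

definition ones_zeros :: "nat \<Rightarrow> nat \<Rightarrow> nat" where
  "ones_zeros k i = (if i \<le> k then 1 else 0)"

definition hamiltonian :: "nat \<Rightarrow> nat set set \<Rightarrow> complex Matrix.mat" where
  "hamiltonian n E = - foldr (+) (map (stab n E) [1..<n+1]) (0\<^sub>m (2^n) (2^n))"

definition mtrace :: "complex Matrix.mat \<Rightarrow> complex" where
  "mtrace A = (\<Sum>i<dim_row A. A $$ (i, i))"

definition mat_exp :: "complex Matrix.mat \<Rightarrow> complex Matrix.mat" where
  "mat_exp A = Matrix.mat (dim_row A) (dim_col A)
     (\<lambda>(i, j). \<Sum>k. (A ^\<^sub>m k) $$ (i, j) / of_nat (fact k))"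

definition thermal_state :: "nat \<Rightarrow> nat set set \<Rightarrow> real \<Rightarrow> complex Matrix.mat" where
  "thermal_state n E \<beta> =
     (let M = mat_exp (complex_of_real (- \<beta>) \<cdot>\<^sub>m hamiltonian n E) in (1 / mtrace M) \<cdot>\<^sub>m M)"

definition expval :: "complex Matrix.vec \<Rightarrow> complex Matrix.mat \<Rightarrow> complex" where
  "expval \<psi> \<rho> = (\<Sum>a<dim_vec \<psi>. \<Sum>b<dim_vec \<psi>. cnj (\<psi> $ a) * \<rho> $$ (a, b) * \<psi> $ b)"

text \<open>Born probability of outcome a \<in> {+1,-1} when measuring the involutive Hermitian
  observable S (S^2 = I) on rho; (I + a S)/2 is the projector onto its a-eigenspace.\<close>
definition outcome_prob :: "complex Matrix.mat \<Rightarrow> complex Matrix.mat \<Rightarrow> real \<Rightarrow> real" where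
  "outcome_prob \<rho> S a =
     Re (mtrace (\<rho> * ((1/2 :: complex) \<cdot>\<^sub>m (1\<^sub>m (dim_row S) + complex_of_real a \<cdot>\<^sub>m S))))"

definition F_est :: "(nat \<Rightarrow> 'a \<Rightarrow> real) \<Rightarrow> nat \<Rightarrow> 'a \<Rightarrow> real" where
  "F_est out N \<omega> = (\<Sum>i<N. out i \<omega>) / real N"

end

theory Submission
  imports Defs
begin

text \<open>
  Let H be the n-qubit Hadamard matrix and C the diagonal product of the CZ gates, so that
  |G> = C H |0...0>. Since H Z_i H = X_i and C X_i C = g_i, all stabilizers are diagonalized
  simultaneously: g_i = U Z_i U^-1 with U = C H. Hence the Hamiltonian, the thermal state and
  S_{1^k 0^k} are diagonal in the basis U, with eigenvalues that factorize over the bits of the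
  basis index. With x = exp(-2\<beta>) this gives the fidelity <G|\<rho>|G> = (1 + x)^-n and the mean
  outcome tanh(\<beta>)^k = ((1 - x)/(1 + x))^k, and Bernoulli's inequality shows that the fidelity
  exceeds the mean by at most k x^2/(1 + x)^n. Hoeffding's inequality controls the empirical mean
  of N samples, and combined with Borel-Cantelli it gives the strong law of large numbers.
\<close>

lemma sum_list_upt_Suc: "(\<Sum>i\<leftarrow>[m..<n+1]. f i) = (\<Sum>i\<in>{m..n}. f i)"
  by (simp only: interv_sum_list_conv_sum_set_nat set_upt) (simp add: atLeastLessThanSuc_atLeastAtMost)

lemma prod_list_upt_Suc: "(\<Prod>i\<leftarrow>[m..<n+1]. f i) = (\<Prod>i\<in>{m..n}. f i)"
  by (simp only: prod.distinct_set_conv_list[symmetric] distinct_upt set_upt)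
    (simp add: atLeastLessThanSuc_atLeastAtMost)

lemma prod_list_map_filter:
  "(\<Prod>x\<leftarrow>filter P xs. f x) = (\<Prod>x\<leftarrow>xs. if P x then f x else 1)"
  by (induction xs) simp_all

lemma prod_list_concat: "prod_list (concat xss) = (\<Prod>xs\<leftarrow>xss. prod_list xs)"
  by (induction xss) auto

lemma prod_list_neg_one_power: "(\<Prod>x\<leftarrow>xs. (-1 :: 'a::comm_ring_1) ^ f x) = (-1) ^ (\<Sum>x\<leftarrow>xs. f x)"
  by (induction xs) (simp_all add: power_add)

lemma sum_lessThan_double: "(\<Sum>a<2 * (m::nat). g a) = (\<Sum>r<m. g (2 * r) + g (2 * r + 1))"
  by (induction m) (auto simp: algebra_simps)

lemma qbit_less_2: "qbit n i a < 2"
  by (simp add: qbit_def)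

lemma qbit_0 [simp]: "qbit n i 0 = 0"
  by (simp add: qbit_def)

lemma qbit_Suc: "i \<le> n \<Longrightarrow> qbit (Suc n) i a = qbit n i (a div 2)"
  by (simp add: qbit_def Suc_diff_le div_mult2_eq)

lemma qbit_Suc_self: "qbit (Suc n) (Suc n) a = a mod 2"
  by (simp add: qbit_def)

lemma qbit_inject:
  assumes "a < 2 ^ n" "b < 2 ^ n" "\<forall>i\<in>{1..n}. qbit n i a = qbit n i b"
  shows "a = b"
  using assms
proof (induction n arbitrary: a b)
  case (Suc n)
  have "a mod 2 = b mod 2"
    using Suc.prems(3)[rule_format, of "Suc n"] by (simp add: qbit_Suc_self)
  moreover have "a div 2 = b div 2"
    using Suc.prems by (intro Suc.IH) (auto simp flip: qbit_Suc)
  ultimately show ?case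
    by (metis div_mult_mod_eq)
qed simp

lemma even_add_bits_iff: "x < 2 \<Longrightarrow> y < 2 \<Longrightarrow> even (x + y) \<longleftrightarrow> x = (y::nat)"
  by (cases x; cases y) auto

lemma sum_prod_qbit:
  "(\<Sum>a<2 ^ n. \<Prod>i\<in>{1..n}. f i (qbit n i a)) = (\<Prod>i\<in>{1..n}. f i 0 + f i 1 :: 'b::comm_semiring_1)"
proof (induction n arbitrary: f)
  case (Suc n)
  have split: "(\<Prod>i\<in>{1..Suc n}. f i (qbit (Suc n) i a))
      = f (Suc n) (a mod 2) * (\<Prod>i\<in>{1..n}. f i (qbit n i (a div 2)))" for a
    by (simp add: prod.cl_ivl_Suc qbit_Suc qbit_Suc_self mult.commute)
  have "(\<Sum>a<2 ^ Suc n. \<Prod>i\<in>{1..Suc n}. f i (qbit (Suc n) i a))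
      = (\<Sum>r<2 ^ n. (f (Suc n) 0 + f (Suc n) 1) * (\<Prod>i\<in>{1..n}. f i (qbit n i r)))"
    by (simp only: power_Suc sum_lessThan_double split) (simp add: distrib_right)
  also have "\<dots> = (\<Prod>i\<in>{1..Suc n}. f i 0 + f i 1)"
    by (simp only: Suc.IH flip: sum_distrib_left) (simp add: prod.cl_ivl_Suc mult.commute)
  finally show ?case .
qed simp

lemma sum_neg_one_power_qbit:
  "(\<Sum>s<2 ^ n. (-1 :: 'a::comm_ring_1) ^ (\<Sum>j\<in>{1..n}. c j * qbit n j s))
     = (if \<forall>j\<in>{1..n}. even (c j) then 2 ^ n else 0)"
proof -
  have "(\<Sum>s<2 ^ n. (-1 :: 'a) ^ (\<Sum>j\<in>{1..n}. c j * qbit n j s))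
      = (\<Prod>j\<in>{1..n}. 1 + (-1) ^ c j)"
    using sum_prod_qbit[of "\<lambda>j x. (-1 :: 'a) ^ (c j * x)" n] by (simp add: power_sum)
  also have "\<dots> = (\<Prod>j\<in>{1..n}. if even (c j) then 2 else 0)"
    by (intro prod.cong) auto
  finally show ?thesis
    by (force intro: prod_zero)
qed

section \<open>Matrices diagonal in a given basis\<close>

lemma index_mult_mat_lessThan:
  "A \<in> carrier_mat nr m \<Longrightarrow> B \<in> carrier_mat m nc \<Longrightarrow> i < nr \<Longrightarrow> j < nc \<Longrightarrow>
    (A * B) $$ (i, j) = (\<Sum>k<m. A $$ (i, k) * B $$ (k, j))"
  by (auto simp: scalar_prod_def lessThan_atLeast0 intro!: sum.cong)

lemma mult_carrier_square [simp]:
  "A \<in> carrier_mat n n \<Longrightarrow> B \<in> carrier_mat n n \<Longrightarrow> A * B \<in> carrier_mat n n"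
  by (rule mult_carrier_mat)

lemma mult_mat_cancel_middle:
  fixes X A B Y :: "'a::semiring_1 mat"
  assumes X: "X \<in> carrier_mat d d" and A: "A \<in> carrier_mat d d" and B: "B \<in> carrier_mat d d"
    and Y: "Y \<in> carrier_mat d d" and "A * B = 1\<^sub>m d"
  shows "X * A * (B * Y) = X * Y"
proof -
  have "X * A * (B * Y) = X * (A * B * Y)"
    using assoc_mult_mat[OF X A mult_carrier_mat[OF B Y]] assoc_mult_mat[OF A B Y] by simp
  then show ?thesis
    using \<open>A * B = 1\<^sub>m d\<close> by (simp add: left_mult_one_mat[OF Y])
qed

lemma dim_mat_diag [simp]: "dim_row (mat_diag n f) = n" "dim_col (mat_diag n f) = n"
  by (simp_all add: mat_diag_def)

lemma mprod_list_mat_diag: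
  "mprod_list d (map (\<lambda>x. mat_diag d (h x)) xs) = mat_diag d (\<lambda>a. \<Prod>x\<leftarrow>xs. h x a)"
  by (induction xs) (auto simp: mprod_list_def)

lemma index_mat_exp:
  "a < dim_row A \<Longrightarrow> b < dim_col A \<Longrightarrow>
    mat_exp A $$ (a, b) = (\<Sum>k. (A ^\<^sub>m k) $$ (a, b) / of_nat (fact k))"
  unfolding mat_exp_def by (subst index_mat(1)) auto

lemma mat_exp_dim [simp]: "dim_row (mat_exp A) = dim_row A" "dim_col (mat_exp A) = dim_col A"
  unfolding mat_exp_def by (rule dim_row_mat dim_col_mat)+

locale basis_change =
  fixes d :: nat and U V :: "complex mat"
  assumes U_carrier: "U \<in> carrier_mat d d" and V_carrier: "V \<in> carrier_mat d d"
    and V_mult_U: "V * U = 1\<^sub>m d" and U_mult_V: "U * V = 1\<^sub>m d"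
begin

definition diag_op :: "(nat \<Rightarrow> complex) \<Rightarrow> complex mat" where
  "diag_op f = U * mat_diag d f * V"

lemma diag_op_carrier [simp]: "diag_op f \<in> carrier_mat d d"
  and diag_op_dim [simp]: "dim_row (diag_op f) = d" "dim_col (diag_op f) = d"
  using U_carrier V_carrier by (auto simp: diag_op_def)

lemma index_diag_op:
  assumes "a < d" "b < d"
  shows "diag_op f $$ (a, b) = (\<Sum>c<d. U $$ (a, c) * f c * V $$ (c, b))"
  using assms U_carrier V_carrier unfolding diag_op_def
  by (subst index_mult_mat_lessThan[of _ d d]) (auto simp: mat_diag_mult_right[of _ d] intro!: sum.cong)

lemma diag_op_mult: "diag_op f * diag_op g = diag_op (\<lambda>c. f c * g c)"
proof -
  have square: "A * B \<in> carrier_mat d d" if "A \<in> carrier_mat d d" "B \<in> carrier_mat d d" for A B :: "complex mat"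
    using that by (rule mult_carrier_mat)
  have "diag_op f * diag_op g = U * (mat_diag d f * ((V * U) * (mat_diag d g * V)))"
    unfolding diag_op_def using U_carrier V_carrier by (simp add: assoc_mult_mat[of _ d d _ d _ d] square)
  also have "\<dots> = U * (mat_diag d f * (mat_diag d g * V))"
    using V_carrier by (simp add: V_mult_U left_mult_one_mat[OF square[OF mat_diag_dim V_carrier]])
  also have "\<dots> = U * ((mat_diag d f * mat_diag d g) * V)"
    using V_carrier by (subst assoc_mult_mat[of _ d d _ d V d]) auto
  also have "\<dots> = diag_op (\<lambda>c. f c * g c)"
    using U_carrier V_carrier by (simp add: diag_op_def assoc_mult_mat[of U d d _ d V d])
  finally show ?thesis .
qed

lemma diag_op_one: "diag_op (\<lambda>_. 1) = 1\<^sub>m d"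
  using U_carrier by (simp add: diag_op_def U_mult_V)

lemma diag_op_add: "diag_op f + diag_op g = diag_op (\<lambda>c. f c + g c)"
  by (rule eq_matI) (auto simp: index_diag_op algebra_simps simp flip: sum.distrib)

lemma diag_op_smult: "x \<cdot>\<^sub>m diag_op f = diag_op (\<lambda>c. x * f c)"
  by (rule eq_matI) (auto simp: index_diag_op sum_distrib_left algebra_simps)

lemma diag_op_uminus: "- diag_op f = diag_op (\<lambda>c. - f c)"
  by (rule eq_matI) (auto simp: index_diag_op simp flip: sum_negf)

lemma diag_op_zero: "diag_op (\<lambda>_. 0) = 0\<^sub>m d d"
  by (rule eq_matI) (auto simp: index_diag_op)

lemma diag_op_power: "diag_op f ^\<^sub>m k = diag_op (\<lambda>c. f c ^ k)"
  by (induction k) (simp_all add: diag_op_one diag_op_mult mult.commute)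

lemma foldr_plus_diag_op:
  "foldr (+) (map (\<lambda>i. diag_op (h i)) xs) (0\<^sub>m d d) = diag_op (\<lambda>c. \<Sum>i\<leftarrow>xs. h i c)"
  by (induction xs) (simp_all add: diag_op_zero diag_op_add)

lemma mprod_list_diag_op:
  "mprod_list d (map (\<lambda>i. diag_op (h i)) xs) = diag_op (\<lambda>c. \<Prod>i\<leftarrow>xs. h i c)"
  by (induction xs) (simp_all add: mprod_list_def diag_op_one diag_op_mult)

lemma mtrace_diag_op: "mtrace (diag_op f) = (\<Sum>c<d. f c)"
proof -
  have "mtrace (diag_op f) = (\<Sum>c<d. f c * (\<Sum>a<d. V $$ (c, a) * U $$ (a, c)))"
    unfolding mtrace_def diag_op_dim
    by (simp add: index_diag_op sum_distrib_left algebra_simps) (rule sum.swap)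
  also have "\<dots> = (\<Sum>c<d. f c)"
  proof (rule sum.cong)
    fix c assume "c \<in> {..<d}"
    then have "(\<Sum>a<d. V $$ (c, a) * U $$ (a, c)) = 1"
      using U_carrier V_carrier V_mult_U by (simp flip: index_mult_mat_lessThan[of V d d U d])
    then show "f c * (\<Sum>a<d. V $$ (c, a) * U $$ (a, c)) = f c"
      by simp
  qed simp
  finally show ?thesis .
qed

lemma mat_exp_diag_op: "mat_exp (diag_op f) = diag_op (\<lambda>c. exp (f c))"
proof (rule eq_matI)
  fix a b assume "a < dim_row (diag_op (\<lambda>c. exp (f c)))" "b < dim_col (diag_op (\<lambda>c. exp (f c)))"
  then have ab: "a < d" "b < d"
    by simp_all
  have exp_series: "(\<lambda>k. x ^ k / of_nat (fact k)) sums exp x" for x :: complex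
    using exp_converges[of x] by (simp add: scaleR_conv_of_real divide_inverse mult.commute)
  have "(\<lambda>k. (diag_op f ^\<^sub>m k) $$ (a, b) / of_nat (fact k))
      = (\<lambda>k. \<Sum>c<d. U $$ (a, c) * V $$ (c, b) * (f c ^ k / of_nat (fact k)))"
    using ab by (auto simp: diag_op_power index_diag_op sum_divide_distrib intro!: sum.cong)
  moreover have "(\<lambda>k. \<Sum>c<d. U $$ (a, c) * V $$ (c, b) * (f c ^ k / of_nat (fact k)))
      sums (\<Sum>c<d. U $$ (a, c) * V $$ (c, b) * exp (f c))"
    by (intro sums_sum sums_mult exp_series)
  ultimately have "(\<Sum>k. (diag_op f ^\<^sub>m k) $$ (a, b) / of_nat (fact k))
      = (\<Sum>c<d. U $$ (a, c) * exp (f c) * V $$ (c, b))"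
    by (simp add: sums_iff algebra_simps)
  then have "mat_exp (diag_op f) $$ (a, b) = (\<Sum>c<d. U $$ (a, c) * exp (f c) * V $$ (c, b))"
    using ab by (subst index_mat_exp) simp_all
  also have "\<dots> = diag_op (\<lambda>c. exp (f c)) $$ (a, b)"
    using ab by (rule index_diag_op[symmetric])
  finally show "mat_exp (diag_op f) $$ (a, b) = diag_op (\<lambda>c. exp (f c)) $$ (a, b)" .
qed simp_all

lemma outcome_prob_diag_op:
  "outcome_prob (diag_op (\<lambda>c. of_real (r c))) (diag_op (\<lambda>c. of_real (s c))) a
     = (\<Sum>c<d. r c * (1 + a * s c)) / 2"
proof -
  have "diag_op (\<lambda>c. of_real (r c)) * ((1/2 :: complex) \<cdot>\<^sub>m (1\<^sub>m d + of_real a \<cdot>\<^sub>m diag_op (\<lambda>c. of_real (s c))))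
      = diag_op (\<lambda>c. of_real (r c * (1 + a * s c) / 2))"
    by (simp add: diag_op_one[symmetric] diag_op_smult diag_op_add diag_op_mult algebra_simps add_divide_distrib)
  then show ?thesis
    by (simp add: outcome_prob_def mtrace_diag_op sum_divide_distrib flip: of_real_sum)
qed

end

section \<open>Pauli and Hadamard matrices\<close>

lemma pauliZ_eq_mat_diag: "pauliZ n i = mat_diag (2 ^ n) (\<lambda>a. (-1) ^ qbit n i a)"
  unfolding pauliZ_def mat_diag_def by (rule cong_mat) auto

lemma pauliX_carrier [simp]: "pauliX n i \<in> carrier_mat (2 ^ n) (2 ^ n)"
  and pauliX_dim [simp]: "dim_row (pauliX n i) = 2 ^ n" "dim_col (pauliX n i) = 2 ^ n"
  by (simp_all add: pauliX_def)

definition hadamard :: "nat \<Rightarrow> complex mat" where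
  "hadamard n = Matrix.mat (2 ^ n) (2 ^ n)
     (\<lambda>(a, b). (-1) ^ (\<Sum>i\<in>{1..n}. qbit n i a * qbit n i b) / complex_of_real (sqrt (2 ^ n)))"

lemma hadamard_carrier [simp]: "hadamard n \<in> carrier_mat (2 ^ n) (2 ^ n)"
  and hadamard_dim [simp]: "dim_row (hadamard n) = 2 ^ n" "dim_col (hadamard n) = 2 ^ n"
  by (simp_all add: hadamard_def)

lemma index_hadamard:
  "a < 2 ^ n \<Longrightarrow> b < 2 ^ n \<Longrightarrow>
    hadamard n $$ (a, b) = (-1) ^ (\<Sum>i\<in>{1..n}. qbit n i a * qbit n i b) / complex_of_real (sqrt (2 ^ n))"
  by (simp add: hadamard_def)

lemma hadamard_sandwich_index:
  assumes "a < 2 ^ n" "b < 2 ^ n"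
  shows "(hadamard n * mat_diag (2 ^ n) (\<lambda>s. (-1) ^ (\<Sum>j\<in>{1..n}. e j * qbit n j s)) * hadamard n) $$ (a, b)
       = (if \<forall>j\<in>{1..n}. even (qbit n j a + e j + qbit n j b) then 1 else 0)"
proof -
  have sqrt_sq: "complex_of_real (sqrt (2 ^ n)) * complex_of_real (sqrt (2 ^ n)) = 2 ^ n"
    by (simp flip: of_real_mult)
  let ?D = "mat_diag (2 ^ n) (\<lambda>s. (-1) ^ (\<Sum>j\<in>{1..n}. e j * qbit n j s))"
  have "(hadamard n * ?D * hadamard n) $$ (a, b)
      = (\<Sum>s<2 ^ n. hadamard n $$ (a, s) * (-1) ^ (\<Sum>j\<in>{1..n}. e j * qbit n j s) * hadamard n $$ (s, b))"
    using assms by (subst index_mult_mat_lessThan[of _ "2 ^ n" "2 ^ n"])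
      (auto simp: mat_diag_mult_right[of _ "2 ^ n"] intro!: sum.cong)
  also have "\<dots> = (\<Sum>s<2 ^ n. (-1) ^ (\<Sum>j\<in>{1..n}. (qbit n j a + e j + qbit n j b) * qbit n j s)) / 2 ^ n"
    using assms by (simp add: sum_divide_distrib index_hadamard sqrt_sq sum.distrib power_add algebra_simps)
  finally show ?thesis
    by (simp only: sum_neg_one_power_qbit) simp
qed

lemma hadamard_mult_hadamard: "hadamard n * hadamard n = 1\<^sub>m (2 ^ n)"
proof (rule eq_matI)
  fix a b assume "a < dim_row (1\<^sub>m (2 ^ n))" "b < dim_col (1\<^sub>m (2 ^ n) :: complex mat)"
  then have ab: "a < 2 ^ n" "b < 2 ^ n"
    by auto
  have "hadamard n * hadamard n = hadamard n * mat_diag (2 ^ n) (\<lambda>s. (-1) ^ (\<Sum>j\<in>{1..n}. 0 * qbit n j s)) * hadamard n"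
    by (simp add: right_mult_one_mat[OF hadamard_carrier])
  moreover have "(\<forall>j\<in>{1..n}. even (qbit n j a + 0 + qbit n j b)) \<longleftrightarrow> a = b"
    using ab qbit_inject[of a n b] by (simp only: add_0_right even_add_bits_iff qbit_less_2) auto
  ultimately show "(hadamard n * hadamard n) $$ (a, b) = 1\<^sub>m (2 ^ n) $$ (a, b)"
    using ab by (simp only: hadamard_sandwich_index) simp
qed auto

lemma hadamard_pauliZ_hadamard:
  assumes "i \<in> {1..n}"
  shows "hadamard n * pauliZ n i * hadamard n = pauliX n i"
proof (rule eq_matI)
  fix a b assume "a < dim_row (pauliX n i)" "b < dim_col (pauliX n i)"
  then have ab: "a < 2 ^ n" "b < 2 ^ n"
    by simp_all
  let ?e = "\<lambda>j. if j = i then 1 else 0"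
  have "pauliZ n i = mat_diag (2 ^ n) (\<lambda>s. (-1) ^ (\<Sum>j\<in>{1..n}. ?e j * qbit n j s))"
    using assms by (simp add: pauliZ_eq_mat_diag if_distrib[of "\<lambda>x. x * _"] cong: if_cong)
  moreover have "even (qbit n j a + ?e j + qbit n j b)
      \<longleftrightarrow> (if j = i then qbit n j a \<noteq> qbit n j b else qbit n j a = qbit n j b)" for j
    using even_add_bits_iff[OF qbit_less_2 qbit_less_2, of n j a n j b] qbit_less_2[of n j a] qbit_less_2[of n j b]
    by auto
  ultimately show "(hadamard n * pauliZ n i * hadamard n) $$ (a, b) = pauliX n i $$ (a, b)"
    using assms ab by (simp only: hadamard_sandwich_index) (auto simp: pauliX_def)
qed simp_all

section \<open>Graph states and their stabilizers\<close>

lemma simple_graph_no_loop: "simple_graph n E \<Longrightarrow> {i} \<notin> E"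
  unfolding simple_graph_def by (metis doubleton_eq_iff insert_absorb2)

lemma prod_list_edge_list:
  fixes h :: "nat \<times> nat \<Rightarrow> 'a::comm_monoid_mult"
  shows "(\<Prod>e\<leftarrow>edge_list n E. h e) = (\<Prod>p\<in>{1..n}. \<Prod>q\<in>{p<..n}. if {p, q} \<in> E then h (p, q) else 1)"
proof -
  have "(\<Prod>e\<leftarrow>edge_list n E. h e) = (\<Prod>p\<leftarrow>[1..<n+1]. \<Prod>q\<leftarrow>[p+1..<n+1]. if {p, q} \<in> E then h (p, q) else 1)"
    unfolding edge_list_def
    by (simp add: map_concat prod_list_concat comp_def if_distrib[of "map _"] if_distrib[of prod_list] cong: if_cong)
  also have "\<dots> = (\<Prod>p\<in>{1..n}. \<Prod>q\<in>{p<..n}. if {p, q} \<in> E then h (p, q) else 1)"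
    by (simp only: prod_list_upt_Suc) (simp add: atLeastSucAtMost_greaterThanAtMost)
  finally show ?thesis .
qed

lemma prod_edges_incident:
  fixes u :: "nat \<Rightarrow> 'a::comm_monoid_mult"
  assumes "simple_graph n E" and "i \<in> {1..n}"
  shows "(\<Prod>p\<in>{1..n}. \<Prod>q\<in>{p<..n}. if {p, q} \<in> E then (if p = i then u q else if q = i then u p else 1) else 1)
       = (\<Prod>j\<in>{1..n}. if {i, j} \<in> E then u j else 1)"
proof -
  let ?above = "\<lambda>j. if i < j \<and> {i, j} \<in> E then u j else 1"
  let ?below = "\<lambda>j. if j < i \<and> {i, j} \<in> E then u j else 1"
  have "(\<Prod>p\<in>{1..n}. \<Prod>q\<in>{p<..n}. if {p, q} \<in> E then (if p = i then u q else if q = i then u p else 1) else 1)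
      = (\<Prod>p\<in>{1..n}. \<Prod>q\<in>{p<..n}. (if p = i then ?above q else 1) * (if q = i then ?below p else 1))"
    by (intro prod.cong refl) (auto simp: insert_commute)
  also have "\<dots> = (\<Prod>p\<in>{1..n}. (if p = i then \<Prod>q\<in>{p<..n}. ?above q else 1) * ?below p)"
    using assms(2) by (intro prod.cong refl) (auto simp: prod.distrib)
  also have "\<dots> = (\<Prod>j\<in>{1..n}. ?above j) * (\<Prod>j\<in>{1..n}. ?below j)"
  proof -
    have "(\<Prod>q\<in>{i<..n}. ?above q) = (\<Prod>j\<in>{1..n}. ?above j)"
      using assms(2) by (intro prod.mono_neutral_left) auto
    then show ?thesis
      using assms(2) by (simp add: prod.distrib)
  qed
  also have "\<dots> = (\<Prod>j\<in>{1..n}. if {i, j} \<in> E then u j else 1)"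
    using simple_graph_no_loop[OF assms(1), of i]
    by (simp add: prod.distrib[symmetric]) (intro prod.cong refl, auto)
  finally show ?thesis .
qed

definition cz_phase :: "nat \<Rightarrow> nat set set \<Rightarrow> nat \<Rightarrow> complex" where
  "cz_phase n E a = (-1) ^ (\<Sum>(i, j)\<leftarrow>edge_list n E. qbit n i a * qbit n j a)"

lemma cz_phase_mult_self [simp]: "cz_phase n E a * cz_phase n E a = 1"
  by (simp add: cz_phase_def flip: power_add)

lemma cnj_cz_phase [simp]: "cnj (cz_phase n E a) = cz_phase n E a"
  by (simp add: cz_phase_def)

lemma CZ_product_eq_mat_diag:
  "mprod_list (2 ^ n) (map (\<lambda>(i, j). CZ n i j) (edge_list n E)) = mat_diag (2 ^ n) (cz_phase n E)"
proof -
  have "CZ n i j = mat_diag (2 ^ n) (\<lambda>a. (-1) ^ (qbit n i a * qbit n j a))" for i j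
    unfolding CZ_def mat_diag_def by (rule cong_mat) auto
  then show ?thesis
    by (simp add: case_prod_unfold mprod_list_mat_diag prod_list_neg_one_power cz_phase_def[abs_def])
qed

lemma neg_one_power_flipped_edge:
  assumes flip: "qbit n i a + qbit n i b = 1" and "p \<noteq> q"
    and same: "p \<noteq> i \<Longrightarrow> qbit n p a = qbit n p b" "q \<noteq> i \<Longrightarrow> qbit n q a = qbit n q b"
  shows "(-1 :: 'a::comm_ring_1) ^ (qbit n p a * qbit n q a + qbit n p b * qbit n q b)
       = (if p = i then (-1) ^ qbit n q b else if q = i then (-1) ^ qbit n p b else 1)"
proof -
  consider "p = i" | "q = i" | "p \<noteq> i" "q \<noteq> i"
    by blast
  then show ?thesis
  proof cases
    case 1
    then have "qbit n p a * qbit n q a + qbit n p b * qbit n q b = (qbit n i a + qbit n i b) * qbit n q b"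
      using same \<open>p \<noteq> q\<close> by (simp add: algebra_simps)
    then show ?thesis
      using 1 flip by simp
  next
    case 2
    then have "qbit n p a * qbit n q a + qbit n p b * qbit n q b = (qbit n i a + qbit n i b) * qbit n p b"
      using same \<open>p \<noteq> q\<close> by (simp add: algebra_simps)
    then show ?thesis
      using 2 \<open>p \<noteq> q\<close> flip by simp
  next
    case 3
    then show ?thesis
      using same by simp
  qed
qed

lemma cz_phase_mult_flip:
  assumes "simple_graph n E" and i: "i \<in> {1..n}" and "qbit n i a \<noteq> qbit n i b"
    and same: "\<forall>q\<in>{1..n}. q \<noteq> i \<longrightarrow> qbit n q a = qbit n q b"
  shows "cz_phase n E a * cz_phase n E b = (\<Prod>j\<in>{1..n}. if {i, j} \<in> E then (-1) ^ qbit n j b else 1)"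
proof -
  have flip: "qbit n i a + qbit n i b = 1"
    using assms(3) qbit_less_2[of n i a] qbit_less_2[of n i b] by linarith
  have edge: "(-1 :: complex) ^ (qbit n p a * qbit n q a + qbit n p b * qbit n q b)
      = (if p = i then (-1) ^ qbit n q b else if q = i then (-1) ^ qbit n p b else 1)"
    if "p \<in> {1..n}" "q \<in> {p<..n}" for p q
    using flip same that by (intro neg_one_power_flipped_edge) auto
  have "cz_phase n E a * cz_phase n E b
      = (\<Prod>(p, q)\<leftarrow>edge_list n E. (-1) ^ (qbit n p a * qbit n q a + qbit n p b * qbit n q b))"
    by (simp add: cz_phase_def prod_list_neg_one_power sum_list_addf case_prod_unfold flip: power_add)
  also have "\<dots> = (\<Prod>p\<in>{1..n}. \<Prod>q\<in>{p<..n}. if {p, q} \<in> E then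
      (if p = i then (-1) ^ qbit n q b else if q = i then (-1) ^ qbit n p b else 1) else 1)"
    unfolding prod_list_edge_list by (intro prod.cong refl) (auto simp: edge)
  also have "\<dots> = (\<Prod>j\<in>{1..n}. if {i, j} \<in> E then (-1) ^ qbit n j b else 1)"
    using assms(1) i by (rule prod_edges_incident)
  finally show ?thesis .
qed

lemma stab_eq_cz_sandwich:
  assumes "simple_graph n E" and "i \<in> {1..n}"
  shows "stab n E i = mat_diag (2 ^ n) (cz_phase n E) * pauliX n i * mat_diag (2 ^ n) (cz_phase n E)"
proof -
  define z where "z b = (\<Prod>j\<in>{1..n}. if {i, j} \<in> E then (-1) ^ qbit n j b else 1 :: complex)" for b
  have "stab n E i = pauliX n i * mat_diag (2 ^ n) z"
  proof -
    have z: "(\<Prod>j\<leftarrow>filter (\<lambda>j. {i, j} \<in> E) [1..<n+1]. (-1) ^ qbit n j b) = z b" for b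
      by (simp only: prod_list_map_filter prod_list_upt_Suc z_def)
    have "map (pauliZ n) js = map (\<lambda>j. mat_diag (2 ^ n) (\<lambda>a. (-1) ^ qbit n j a)) js" for js
      by (simp add: pauliZ_eq_mat_diag)
    then show ?thesis
      by (simp only: stab_def mprod_list_mat_diag z)
  qed
  also have "\<dots> = mat_diag (2 ^ n) (cz_phase n E) * pauliX n i * mat_diag (2 ^ n) (cz_phase n E)"
  proof (rule eq_matI)
    fix a b assume "a < dim_row (mat_diag (2 ^ n) (cz_phase n E) * pauliX n i * mat_diag (2 ^ n) (cz_phase n E))"
      and "b < dim_col (mat_diag (2 ^ n) (cz_phase n E) * pauliX n i * mat_diag (2 ^ n) (cz_phase n E))"
    then have ab: "a < 2 ^ n" "b < 2 ^ n"
      by (auto simp: mat_diag_def)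
    show "(pauliX n i * mat_diag (2 ^ n) z) $$ (a, b)
        = (mat_diag (2 ^ n) (cz_phase n E) * pauliX n i * mat_diag (2 ^ n) (cz_phase n E)) $$ (a, b)"
    proof (cases "qbit n i a \<noteq> qbit n i b \<and> (\<forall>q\<in>{1..n}. q \<noteq> i \<longrightarrow> qbit n q a = qbit n q b)")
      case True
      then have "z b = cz_phase n E a * cz_phase n E b"
        using cz_phase_mult_flip[OF assms] by (simp add: z_def)
      then show ?thesis
        using ab by (simp add: mat_diag_mult_left[of _ "2 ^ n" "2 ^ n"] mat_diag_mult_right[of _ "2 ^ n"] pauliX_def)
    next
      case False
      then show ?thesis
        using ab by (auto simp: mat_diag_mult_left[of _ "2 ^ n" "2 ^ n"] mat_diag_mult_right[of _ "2 ^ n"] pauliX_def)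
    qed
  qed (auto simp: mat_diag_def)
  finally show ?thesis .
qed

definition graph_basis :: "nat \<Rightarrow> nat set set \<Rightarrow> complex mat" where
  "graph_basis n E = mat_diag (2 ^ n) (cz_phase n E) * hadamard n"

definition graph_basis_inv :: "nat \<Rightarrow> nat set set \<Rightarrow> complex mat" where
  "graph_basis_inv n E = hadamard n * mat_diag (2 ^ n) (cz_phase n E)"

lemma graph_basis_carrier [simp]:
  "graph_basis n E \<in> carrier_mat (2 ^ n) (2 ^ n)" "graph_basis_inv n E \<in> carrier_mat (2 ^ n) (2 ^ n)"
  by (simp_all add: graph_basis_def graph_basis_inv_def)

interpretation graph: basis_change "2 ^ n" "graph_basis n E" "graph_basis_inv n E" for n E
proof
  show "graph_basis_inv n E * graph_basis n E = 1\<^sub>m (2 ^ n)"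
    unfolding graph_basis_def graph_basis_inv_def
    by (subst mult_mat_cancel_middle[of _ "2 ^ n"]) (simp_all add: hadamard_mult_hadamard)
  show "graph_basis n E * graph_basis_inv n E = 1\<^sub>m (2 ^ n)"
    unfolding graph_basis_def graph_basis_inv_def
    by (subst mult_mat_cancel_middle[of _ "2 ^ n"]) (simp_all add: hadamard_mult_hadamard)
qed simp_all

lemma stab_eq_diag_op:
  assumes "simple_graph n E" and "i \<in> {1..n}"
  shows "stab n E i = graph.diag_op n E (\<lambda>c. (-1) ^ qbit n i c)"
proof -
  let ?C = "mat_diag (2 ^ n) (cz_phase n E)" and ?H = "hadamard n" and ?Z = "pauliZ n i"
  have "stab n E i = ?C * (?H * ?Z * ?H) * ?C"
    using assms by (simp add: stab_eq_cz_sandwich hadamard_pauliZ_hadamard)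
  also have "\<dots> = ?C * ?H * ?Z * (?H * ?C)"
    by (simp add: pauliZ_eq_mat_diag assoc_mult_mat[of _ "2 ^ n" "2 ^ n" _ "2 ^ n" _ "2 ^ n"])
  finally show ?thesis
    unfolding graph.diag_op_def by (simp add: graph_basis_def graph_basis_inv_def pauliZ_eq_mat_diag)
qed

lemma hamiltonian_eq_diag_op:
  assumes "simple_graph n E"
  shows "hamiltonian n E = graph.diag_op n E (\<lambda>c. - (\<Sum>i\<in>{1..n}. (-1) ^ qbit n i c))"
proof -
  have "map (stab n E) [1..<n+1] = map (\<lambda>i. graph.diag_op n E (\<lambda>c. (-1) ^ qbit n i c)) [1..<n+1]"
    using assms by (intro map_cong) (auto simp: stab_eq_diag_op)
  then show ?thesis
    by (simp only: hamiltonian_def graph.foldr_plus_diag_op graph.diag_op_uminus sum_list_upt_Suc)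
qed

lemma S_op_eq_diag_op:
  assumes "simple_graph n E"
  shows "S_op n E l = graph.diag_op n E (\<lambda>c. \<Prod>i\<in>{1..n}. ((-1) ^ qbit n i c) ^ l i)"
proof -
  have "map (\<lambda>i. stab n E i ^\<^sub>m l i) [1..<n+1]
      = map (\<lambda>i. graph.diag_op n E (\<lambda>c. ((-1) ^ qbit n i c) ^ l i)) [1..<n+1]"
    using assms by (intro map_cong) (auto simp: stab_eq_diag_op graph.diag_op_power)
  then show ?thesis
    by (simp only: S_op_def graph.mprod_list_diag_op prod_list_upt_Suc)
qed

lemma graph_basis_index_0:
  assumes "a < 2 ^ n"
  shows "graph_basis n E $$ (a, 0) = cz_phase n E a / complex_of_real (sqrt (2 ^ n))"
    and "graph_basis_inv n E $$ (0, a) = cz_phase n E a / complex_of_real (sqrt (2 ^ n))"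
  using assms
  by (simp_all add: graph_basis_def graph_basis_inv_def mat_diag_mult_left[of _ "2 ^ n" "2 ^ n"]
      mat_diag_mult_right[of _ "2 ^ n"] index_hadamard)

lemma graph_state_dim [simp]: "dim_vec (graph_state n E) = 2 ^ n"
  by (simp add: graph_state_def CZ_product_eq_mat_diag plus_state_def)

lemma graph_state_index:
  assumes "a < 2 ^ n"
  shows "graph_state n E $ a = cz_phase n E a / complex_of_real (sqrt (2 ^ n))"
  using assms
  by (simp add: graph_state_def CZ_product_eq_mat_diag plus_state_def mat_diag_def scalar_prod_def
      if_distrib[of "\<lambda>x. x * _"] if_distrib[of "\<lambda>x. x / _"] cong: if_cong)

lemma expval_graph_state_diag_op: "expval (graph_state n E) (graph.diag_op n E f) = f 0"
proof -
  let ?U = "graph_basis n E" and ?V = "graph_basis_inv n E" and ?\<psi> = "graph_state n E"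
  \<comment> \<open>|G> is column 0 of U, and since its entries are real, <G| is row 0 of U^-1.\<close>
  have \<psi>: "?\<psi> $ a = ?U $$ (a, 0)" "cnj (?U $$ (a, 0)) = ?V $$ (0, a)" if "a < 2 ^ n" for a
    using that by (simp_all add: graph_state_index graph_basis_index_0)
  have "expval ?\<psi> (graph.diag_op n E f)
      = (\<Sum>c<2 ^ n. f c * ((\<Sum>a<2 ^ n. ?V $$ (0, a) * ?U $$ (a, c)) * (\<Sum>b<2 ^ n. ?V $$ (c, b) * ?U $$ (b, 0))))"
  proof -
    have "expval ?\<psi> (graph.diag_op n E f)
        = (\<Sum>a<2 ^ n. \<Sum>b<2 ^ n. \<Sum>c<2 ^ n. f c * ((?V $$ (0, a) * ?U $$ (a, c)) * (?V $$ (c, b) * ?U $$ (b, 0))))"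
      unfolding expval_def graph_state_dim
      by (intro sum.cong refl) (simp add: \<psi> graph.index_diag_op sum_distrib_left sum_distrib_right algebra_simps)
    also have "\<dots> = (\<Sum>c<2 ^ n. \<Sum>a<2 ^ n. \<Sum>b<2 ^ n. f c * ((?V $$ (0, a) * ?U $$ (a, c)) * (?V $$ (c, b) * ?U $$ (b, 0))))"
      by (subst sum.swap) (subst (2) sum.swap, rule refl)
    finally show ?thesis
      by (simp only: sum_product) (simp only: sum_distrib_left)
  qed
  also have "\<dots> = (\<Sum>c<2 ^ n. f c * (1\<^sub>m (2 ^ n) $$ (0, c) * 1\<^sub>m (2 ^ n) $$ (c, 0)))"
  proof -
    have "(\<Sum>a<2 ^ n. ?V $$ (i, a) * ?U $$ (a, j)) = 1\<^sub>m (2 ^ n) $$ (i, j)"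
      if "i < 2 ^ n" "j < 2 ^ n" for i j
      using that graph.V_mult_U index_mult_mat_lessThan[of ?V "2 ^ n" "2 ^ n" ?U "2 ^ n" i j] by simp
    then show ?thesis
      by (intro sum.cong refl) simp
  qed
  also have "\<dots> = f 0"
    by (simp add: if_distrib[of "\<lambda>x. _ * x"] cong: if_cong)
  finally show ?thesis .
qed

section \<open>Thermal graph states\<close>

definition spin_weight :: "real \<Rightarrow> nat \<Rightarrow> real" where
  "spin_weight \<beta> x = exp (\<beta> * (-1) ^ x) / (exp \<beta> + exp (-\<beta>))"

lemma thermal_state_eq_diag_op:
  assumes "simple_graph n E"
  shows "thermal_state n E \<beta> = graph.diag_op n E (\<lambda>c. of_real (\<Prod>i\<in>{1..n}. spin_weight \<beta> (qbit n i c)))"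
proof -
  define w where "w c = (\<Prod>i\<in>{1..n}. exp (\<beta> * (-1) ^ qbit n i c))" for c
  have "complex_of_real (- \<beta>) \<cdot>\<^sub>m hamiltonian n E
      = graph.diag_op n E (\<lambda>c. of_real (\<Sum>i\<in>{1..n}. \<beta> * (-1) ^ qbit n i c))"
    using assms by (simp add: hamiltonian_eq_diag_op graph.diag_op_smult sum_distrib_left sum_negf)
  then have exp_H: "mat_exp (complex_of_real (- \<beta>) \<cdot>\<^sub>m hamiltonian n E) = graph.diag_op n E (\<lambda>c. of_real (w c))"
    by (simp add: graph.mat_exp_diag_op w_def exp_sum flip: exp_of_real)
  have "(\<Sum>c<2 ^ n. w c) = (exp \<beta> + exp (-\<beta>)) ^ n"
    using sum_prod_qbit[of "\<lambda>i x. exp (\<beta> * (-1) ^ x)" n] by (simp add: w_def)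
  then have trace: "mtrace (graph.diag_op n E (\<lambda>c. of_real (w c))) = of_real ((exp \<beta> + exp (-\<beta>)) ^ n)"
    by (simp add: graph.mtrace_diag_op flip: of_real_sum)
  have "w c / (exp \<beta> + exp (-\<beta>)) ^ n = (\<Prod>i\<in>{1..n}. spin_weight \<beta> (qbit n i c))" for c
    by (simp add: w_def spin_weight_def prod_dividef)
  then have "(\<lambda>c. 1 / complex_of_real ((exp \<beta> + exp (-\<beta>)) ^ n) * of_real (w c))
      = (\<lambda>c. of_real (\<Prod>i\<in>{1..n}. spin_weight \<beta> (qbit n i c)))"
    by (metis divide_inverse mult.commute mult_1 of_real_divide)
  then show ?thesis
    unfolding thermal_state_def Let_def exp_H trace graph.diag_op_smult by (rule arg_cong)
qed

lemma spin_weight_sum: "spin_weight \<beta> 0 + spin_weight \<beta> 1 = 1"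
proof -
  have "exp \<beta> + exp (-\<beta>) > 0"
    by (intro add_pos_pos exp_gt_zero)
  then show ?thesis
    by (simp add: spin_weight_def flip: add_divide_distrib)
qed

lemma spin_weight_diff: "spin_weight \<beta> 0 - spin_weight \<beta> 1 = tanh \<beta>"
  by (simp add: spin_weight_def tanh_altdef diff_divide_distrib)

lemma spin_weight_0: "spin_weight \<beta> 0 = 1 / (1 + exp (-2 * \<beta>))"
proof -
  have "exp \<beta> + exp (-\<beta>) = exp \<beta> * (1 + exp (-2 * \<beta>))"
    by (simp add: distrib_left flip: exp_add)
  then show ?thesis
    by (simp add: spin_weight_def)
qed

lemma fidelity_thermal_state:
  assumes "simple_graph n E"
  shows "expval (graph_state n E) (thermal_state n E \<beta>) = of_real (1 / (1 + exp (-2 * \<beta>)) ^ n)"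
  using assms by (simp add: thermal_state_eq_diag_op expval_graph_state_diag_op spin_weight_0 power_one_over)

lemma outcome_prob_thermal_state_S_op:
  assumes "simple_graph n E" and "k \<le> n"
  shows "outcome_prob (thermal_state n E \<beta>) (S_op n E (ones_zeros k)) 1 = (1 + tanh \<beta> ^ k) / 2"
proof -
  define r where "r c = (\<Prod>i\<in>{1..n}. spin_weight \<beta> (qbit n i c))" for c
  define s where "s c = (\<Prod>i\<in>{1..n}. ((-1) ^ qbit n i c) ^ ones_zeros k i :: real)" for c
  have \<rho>: "thermal_state n E \<beta> = graph.diag_op n E (\<lambda>c. of_real (r c))"
    using assms(1) by (simp only: thermal_state_eq_diag_op r_def)
  have S: "S_op n E (ones_zeros k) = graph.diag_op n E (\<lambda>c. of_real (s c))"
    using assms(1) by (simp add: S_op_eq_diag_op s_def)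
  have "(\<Sum>c<2 ^ n. r c) = 1"
    using sum_prod_qbit[of "\<lambda>i. spin_weight \<beta>" n] spin_weight_sum[of \<beta>] by (simp add: r_def)
  moreover have "(\<Sum>c<2 ^ n. r c * s c) = tanh \<beta> ^ k"
  proof -
    have "(\<Sum>c<2 ^ n. r c * s c)
        = (\<Prod>i\<in>{1..n}. spin_weight \<beta> 0 + spin_weight \<beta> 1 * (-1) ^ ones_zeros k i)"
      using sum_prod_qbit[of "\<lambda>i x. spin_weight \<beta> x * ((-1) ^ x) ^ ones_zeros k i" n]
      by (simp add: r_def s_def prod.distrib)
    also have "\<dots> = (\<Prod>i\<in>{1..n}. if i \<le> k then tanh \<beta> else 1)"
      using spin_weight_diff[of \<beta>] spin_weight_sum[of \<beta>] by (intro prod.cong) (auto simp: ones_zeros_def)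
    also have "\<dots> = tanh \<beta> ^ k"
    proof -
      have "{1..n} \<inter> {i. i \<le> k} = {1..k}"
        using assms(2) by auto
      then show ?thesis
        by (simp add: prod.If_cases)
    qed
    finally show ?thesis .
  qed
  ultimately show ?thesis
    unfolding \<rho> S graph.outcome_prob_diag_op by (simp add: algebra_simps sum.distrib)
qed

lemma one_plus_power_ge_quadratic:
  fixes x :: real
  assumes "0 \<le> x"
  shows "(1 + x) ^ n \<ge> 1 + n * x + (n * (n - 1) / 2) * x\<^sup>2"
proof (induction n)
  case (Suc n)
  define c where "c = real n * (real n - 1) / 2"
  have "c \<ge> 0"
    unfolding c_def by (cases n) auto
  have "(1 + x) ^ Suc n \<ge> (1 + n * x + c * x\<^sup>2) * (1 + x)"
    using Suc.IH assms by (simp add: c_def mult_right_mono)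
  moreover have "(1 + n * x + c * x\<^sup>2) * (1 + x) = 1 + Suc n * x + (c + n) * x\<^sup>2 + c * x ^ 3"
    by (simp add: algebra_simps power2_eq_square power3_eq_cube)
  moreover have "c * x ^ 3 \<ge> 0"
    using \<open>c \<ge> 0\<close> assms by simp
  moreover have "(c + n) * x\<^sup>2 = real (Suc n) * (real (Suc n) - 1) / 2 * x\<^sup>2"
    by (simp add: c_def field_simps)
  ultimately show ?case
    by linarith
qed simp

lemma quadratic_over_power_le:
  fixes x :: real
  assumes "0 < x" and "n \<ge> 2"
  shows "n * x\<^sup>2 / (2 * (1 + x) ^ n) \<le> 2 / n"
proof -
  have pos: "real n * (real n - 1) * x\<^sup>2 > 0"
    using assms by simp
  have "real n * (real n - 1) / 2 * x\<^sup>2 \<le> (1 + x) ^ n"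
    using one_plus_power_ge_quadratic[of x n] assms(1) by (smt (verit) mult_nonneg_nonneg of_nat_0_le_iff)
  then have "n * x\<^sup>2 / (2 * (1 + x) ^ n) \<le> n * x\<^sup>2 / (real n * (real n - 1) * x\<^sup>2)"
    using pos assms by (intro divide_left_mono) auto
  also have "\<dots> = 1 / (real n - 1)"
    using assms by (simp add: field_simps)
  also have "\<dots> \<le> 2 / n"
    using assms by (simp add: field_simps)
  finally show ?thesis .
qed

lemma fidelity_gap_bounds:
  fixes x :: real
  assumes "0 \<le> x" and "x \<le> 1"
  shows "0 \<le> 1 / (1 + x) ^ (2 * k) - ((1 - x) / (1 + x)) ^ k"
    and "1 / (1 + x) ^ (2 * k) - ((1 - x) / (1 + x)) ^ k \<le> k * x\<^sup>2 / (1 + x) ^ (2 * k)"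
proof -
  have "(1 + x) ^ (2 * k) = (1 + x) ^ k * (1 + x) ^ k"
    by (simp add: mult_2 power_add)
  then have "((1 - x) / (1 + x)) ^ k = (1 - x) ^ k * (1 + x) ^ k / (1 + x) ^ (2 * k)"
    using assms by (simp add: power_divide)
  also have "(1 - x) ^ k * (1 + x) ^ k = (1 - x\<^sup>2) ^ k"
    by (simp add: power2_eq_square algebra_simps flip: power_mult_distrib)
  finally have "((1 - x) / (1 + x)) ^ k = (1 - x\<^sup>2) ^ k / (1 + x) ^ (2 * k)" .
  then have gap: "1 / (1 + x) ^ (2 * k) - ((1 - x) / (1 + x)) ^ k = (1 - (1 - x\<^sup>2) ^ k) / (1 + x) ^ (2 * k)"
    by (simp add: diff_divide_distrib)
  have "x\<^sup>2 \<le> 1"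
    using assms by (simp add: power_le_one)
  then have "(1 - x\<^sup>2) ^ k \<le> 1" and "1 - k * x\<^sup>2 \<le> (1 - x\<^sup>2) ^ k"
    using Bernoulli_inequality[of "- x\<^sup>2" k] by (auto intro: power_le_one)
  then show "0 \<le> 1 / (1 + x) ^ (2 * k) - ((1 - x) / (1 + x)) ^ k"
    and "1 / (1 + x) ^ (2 * k) - ((1 - x) / (1 + x)) ^ k \<le> k * x\<^sup>2 / (1 + x) ^ (2 * k)"
    unfolding gap using assms by (auto intro: divide_right_mono)
qed

lemma thermal_fidelity_gap:
  assumes "0 \<le> \<beta>"
  shows "0 \<le> 1 / (1 + exp (-2 * \<beta>)) ^ (2 * k) - tanh \<beta> ^ k"
    and "1 / (1 + exp (-2 * \<beta>)) ^ (2 * k) - tanh \<beta> ^ k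
           \<le> real (2 * k) * exp (-4 * \<beta>) / (2 * (1 + exp (-2 * \<beta>)) ^ (2 * k))"
proof -
  have "exp (-4 * \<beta>) = (exp (-2 * \<beta>))\<^sup>2"
    by (simp flip: exp_of_nat_mult)
  then show "0 \<le> 1 / (1 + exp (-2 * \<beta>)) ^ (2 * k) - tanh \<beta> ^ k"
    and "1 / (1 + exp (-2 * \<beta>)) ^ (2 * k) - tanh \<beta> ^ k
           \<le> real (2 * k) * exp (-4 * \<beta>) / (2 * (1 + exp (-2 * \<beta>)) ^ (2 * k))"
    using fidelity_gap_bounds[of "exp (-2 * \<beta>)" k] assms by (simp_all add: tanh_real_altdef)
qed

lemma thermal_bias_le:
  assumes "0 < \<beta>" and "n \<ge> 2"
  shows "real n * exp (-4 * \<beta>) / (2 * (1 + exp (-2 * \<beta>)) ^ n) \<le> 2 / n"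
proof -
  have "exp (-4 * \<beta>) = (exp (-2 * \<beta>))\<^sup>2"
    by (simp flip: exp_of_nat_mult)
  then show ?thesis
    using quadratic_over_power_le[of "exp (-2 * \<beta>)" n] assms(2) by simp
qed

section \<open>Sample means of independent bounded random variables\<close>

context prob_space
begin

lemma expectation_sign_valued:
  assumes "X \<in> borel_measurable M" and "\<And>\<omega>. \<omega> \<in> space M \<Longrightarrow> X \<omega> \<in> {1, -1}"
  shows "expectation X = 2 * prob {\<omega> \<in> space M. X \<omega> = 1} - 1"
proof -
  define A where "A = {\<omega> \<in> space M. X \<omega> = 1}"
  have A: "A \<in> events"
    unfolding A_def using assms(1) by measurable
  have "expectation X = expectation (\<lambda>\<omega>. 2 * indicator A \<omega> - 1)"
    using assms(2) by (intro Bochner_Integration.integral_cong) (auto simp: A_def indicator_def)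
  also have "\<dots> = 2 * prob A - 1"
    using A by (simp add: Bochner_Integration.integral_diff integrable_real_indicator emeasure_eq_measure prob_space)
  finally show ?thesis
    unfolding A_def .
qed

lemma sample_mean_deviation_prob_le:
  assumes indep: "indep_vars (\<lambda>_. borel) X UNIV"
    and bounded: "\<And>i. AE \<omega> in M. X i \<omega> \<in> {a..b}" and "a < b"
    and mean: "\<And>i. expectation (X i) = \<mu>"
    and "N > 0" and "\<epsilon> \<ge> 0"
  shows "prob {\<omega> \<in> space M. \<epsilon> \<le> \<bar>F_est X N \<omega> - \<mu>\<bar>} \<le> 2 * exp (- 2 * real N * \<epsilon>\<^sup>2 / (b - a)\<^sup>2)"
proof -
  interpret Hoeffding_ineq M "{..<N}" X "\<lambda>_. a" "\<lambda>_. b" "\<Sum>i<N. expectation (X i)"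
    using indep bounded by unfold_locales (auto intro: indep_vars_subset)
  have "{\<omega> \<in> space M. \<epsilon> \<le> \<bar>F_est X N \<omega> - \<mu>\<bar>}
      = {\<omega> \<in> space M. \<bar>(\<Sum>i<N. X i \<omega>) - (\<Sum>i<N. expectation (X i))\<bar> \<ge> \<epsilon> * N}"
    using \<open>N > 0\<close> by (auto simp: F_est_def mean field_simps abs_mult)
  also have "prob \<dots> \<le> 2 * exp (- 2 * (\<epsilon> * N)\<^sup>2 / (\<Sum>i<N. (b - a)\<^sup>2))"
    using \<open>N > 0\<close> \<open>a < b\<close> \<open>\<epsilon> \<ge> 0\<close> by (intro Hoeffding_ineq_abs_ge) auto
  also have "- 2 * (\<epsilon> * N)\<^sup>2 / (\<Sum>i<N. (b - a)\<^sup>2) = - 2 * real N * \<epsilon>\<^sup>2 / (b - a)\<^sup>2"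
    using \<open>N > 0\<close> by (simp add: power2_eq_square)
  finally show ?thesis .
qed

lemma sample_mean_AE_eventually_close:
  assumes indep: "indep_vars (\<lambda>_. borel) X UNIV"
    and bounded: "\<And>i. AE \<omega> in M. X i \<omega> \<in> {a..b}" and "a < b"
    and mean: "\<And>i. expectation (X i) = \<mu>" and "0 < e"
  shows "AE \<omega> in M. eventually (\<lambda>N. \<bar>F_est X N \<omega> - \<mu>\<bar> < e) sequentially"
proof -
  have [measurable]: "X i \<in> borel_measurable M" for i
    using indep by (simp add: indep_vars_def)
  define A where "A N = {\<omega> \<in> space M. e \<le> \<bar>F_est X N \<omega> - \<mu>\<bar>}" for N
  have A: "A N \<in> events" for N
    unfolding A_def F_est_def by measurable
  define r where "r = exp (- 2 * e\<^sup>2 / (b - a)\<^sup>2)"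
  have "r < 1"
    using \<open>a < b\<close> \<open>0 < e\<close> by (simp add: r_def)
  have bound: "measure M (A N) \<le> 2 * r ^ N" for N
  proof (cases "N = 0")
    case True
    have "measure M (A N) \<le> 1"
      by (rule prob_le_1)
    moreover have "2 * r ^ N = 2"
      using True by simp
    ultimately show ?thesis
      by linarith
  next
    case False
    then have "measure M (A N) \<le> 2 * exp (- 2 * real N * e\<^sup>2 / (b - a)\<^sup>2)"
      unfolding A_def using assms by (intro sample_mean_deviation_prob_le) auto
    also have "exp (- 2 * real N * e\<^sup>2 / (b - a)\<^sup>2) = r ^ N"
      by (simp add: r_def algebra_simps flip: exp_of_nat_mult)
    finally show ?thesis .
  qed
  have "summable (\<lambda>N. 2 * r ^ N)"
    using \<open>r < 1\<close> by (intro summable_mult summable_geometric) (simp add: r_def)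
  then have "summable (\<lambda>N. measure M (A N))"
    by (rule summable_comparison_test') (use bound in simp)
  with A have "AE \<omega> in M. eventually (\<lambda>N. \<omega> \<in> space M - A N) sequentially"
    by (intro borel_cantelli_AE1) (simp_all add: emeasure_eq_measure)
  then show ?thesis
    by (rule eventually_mono) (auto simp: A_def elim!: eventually_mono)
qed

lemma sample_mean_AE_LIMSEQ:
  assumes indep: "indep_vars (\<lambda>_. borel) X UNIV"
    and bounded: "\<And>i. AE \<omega> in M. X i \<omega> \<in> {a..b}" and "a < b"
    and mean: "\<And>i. expectation (X i) = \<mu>"
  shows "AE \<omega> in M. (\<lambda>N. F_est X N \<omega>) \<longlonglongrightarrow> \<mu>"
proof -
  have "AE \<omega> in M. \<forall>m. eventually (\<lambda>N. \<bar>F_est X N \<omega> - \<mu>\<bar> < 1 / Suc m) sequentially"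
    unfolding AE_all_countable using assms by (intro allI sample_mean_AE_eventually_close) auto
  then show ?thesis
  proof (rule eventually_mono)
    fix \<omega> assume close: "\<forall>m. eventually (\<lambda>N. \<bar>F_est X N \<omega> - \<mu>\<bar> < 1 / Suc m) sequentially"
    show "(\<lambda>N. F_est X N \<omega>) \<longlonglongrightarrow> \<mu>"
    proof (rule LIMSEQ_I)
      fix r :: real assume "0 < r"
      then obtain m where m: "1 / Suc m < r"
        using nat_approx_posE by blast
      obtain N0 where "\<forall>N\<ge>N0. \<bar>F_est X N \<omega> - \<mu>\<bar> < 1 / Suc m"
        using close[rule_format, of m] by (auto simp: eventually_sequentially)
      then show "\<exists>N0. \<forall>N\<ge>N0. norm (F_est X N \<omega> - \<mu>) < r"
        using m by force
    qed
  qed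
qed

lemma sample_mean_confidence:
  assumes indep: "indep_vars (\<lambda>_. borel) X UNIV"
    and bounded: "\<And>i. AE \<omega> in M. X i \<omega> \<in> {a..b}" and "a < b"
    and mean: "\<And>i. expectation (X i) = \<mu>" and bias: "\<bar>F - \<mu>\<bar> \<le> bias"
    and "0 < \<epsilon>" and "0 < \<delta>" and "\<delta> < 2"
    and N: "(b - a)\<^sup>2 / (2 * \<epsilon>\<^sup>2) * ln (2 / \<delta>) \<le> N"
  shows "1 - \<delta> \<le> prob {\<omega> \<in> space M. \<bar>F - F_est X N \<omega>\<bar> \<le> bias + \<epsilon>}"
proof -
  have [measurable]: "X i \<in> borel_measurable M" for i
    using indep by (simp add: indep_vars_def)
  define B where "B = {\<omega> \<in> space M. \<epsilon> \<le> \<bar>F_est X N \<omega> - \<mu>\<bar>}"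
  have B: "B \<in> events"
    unfolding B_def F_est_def by measurable
  have "0 < (b - a)\<^sup>2 / (2 * \<epsilon>\<^sup>2) * ln (2 / \<delta>)"
    using assms by simp
  then have "N > 0"
    using N by linarith
  then have "prob B \<le> 2 * exp (- 2 * real N * \<epsilon>\<^sup>2 / (b - a)\<^sup>2)"
    unfolding B_def using assms by (intro sample_mean_deviation_prob_le) auto
  also have "\<dots> \<le> 2 * exp (- ln (2 / \<delta>))"
    using N \<open>0 < \<epsilon>\<close> \<open>a < b\<close> by (simp add: field_simps)
  also have "\<dots> = \<delta>"
    using \<open>0 < \<delta>\<close> by (simp add: exp_minus)
  finally have "1 - \<delta> \<le> prob (space M - B)"
    using prob_compl[OF B] by simp
  also have "\<dots> \<le> prob {\<omega> \<in> space M. \<bar>F - F_est X N \<omega>\<bar> \<le> bias + \<epsilon>}"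
    using bias by (intro finite_measure_mono) (auto simp: B_def F_est_def)
  finally show ?thesis .
qed

end

theorem theorem1:
  fixes n k :: nat and E :: "nat set set" and kB T \<epsilon> \<delta> :: real
    and M :: "'a measure" and out :: "nat \<Rightarrow> 'a \<Rightarrow> real"
  assumes "even n" and "n \<ge> 4" and "k = n div 2"
    and "simple_graph n E"
    and "kB > 0" and "T > 0"
    and "0 < \<epsilon>" and "\<epsilon> < 1" and "0 < \<delta>" and "\<delta> < 1"
    and "prob_space M"
    and "prob_space.indep_vars M (\<lambda>_. borel) out UNIV"
    and "\<And>i \<omega>. \<omega> \<in> space M \<Longrightarrow> out i \<omega> \<in> {1, -1}"
    and "\<And>i a. a \<in> {1, -1} \<Longrightarrow>
           measure M {\<omega> \<in> space M. out i \<omega> = a}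
             = outcome_prob (thermal_state n E (1 / (kB * T))) (S_op n E (ones_zeros k)) a"
  shows "let \<beta> = 1 / (kB * T);
             \<rho> = thermal_state n E \<beta>;
             F = expval (graph_state n E) \<rho>;
             N = nat \<lceil>(2 / \<epsilon>\<^sup>2) * ln (2 / \<delta>)\<rceil>
         in measure M {\<omega> \<in> space M.
              cmod (F - complex_of_real (F_est out N \<omega>))
                \<le> real n * exp (-4 * \<beta>) / (2 * (1 + exp (-2 * \<beta>)) ^ n) + \<epsilon>} \<ge> 1 - \<delta>
          \<and> real n * exp (-4 * \<beta>) / (2 * (1 + exp (-2 * \<beta>)) ^ n) + \<epsilon> \<le> 2 / real n + \<epsilon>
          \<and> (AE \<omega> in M. convergent (\<lambda>N. F_est out N \<omega>) \<and> lim (\<lambda>N. F_est out N \<omega>) \<le> Re F)"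
proof -
  interpret prob_space M
    by fact
  have [measurable]: "out i \<in> borel_measurable M" for i
    using assms(12) by (simp add: indep_vars_def)
  define \<beta> where "\<beta> = 1 / (kB * T)"
  define N where "N = nat \<lceil>(2 / \<epsilon>\<^sup>2) * ln (2 / \<delta>)\<rceil>"
  define fid where "fid = 1 / (1 + exp (-2 * \<beta>)) ^ n"
  define bias where "bias = real n * exp (-4 * \<beta>) / (2 * (1 + exp (-2 * \<beta>)) ^ n)"
  have "0 < \<beta>" and n: "n = 2 * k"
    using assms(1,3,5,6) by (auto simp: \<beta>_def)
  have gap: "0 \<le> fid - tanh \<beta> ^ k" "fid - tanh \<beta> ^ k \<le> bias"
    using thermal_fidelity_gap[of \<beta> k] \<open>0 < \<beta>\<close> by (simp_all add: fid_def bias_def n)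
  have mean: "expectation (out i) = tanh \<beta> ^ k" for i
    using expectation_sign_valued[of "out i"] assms(13,14)[of _ i]
      outcome_prob_thermal_state_S_op[OF assms(4), of k \<beta>] assms(3)
    by (simp add: \<beta>_def)
  have bounded: "AE \<omega> in M. out i \<omega> \<in> {-1..1}" for i
    using assms(13)[of _ i] by (intro AE_I2) force
  have "(1 - -1)\<^sup>2 / (2 * \<epsilon>\<^sup>2) * ln (2 / \<delta>) \<le> real N"
    unfolding N_def by (simp add: real_nat_ceiling_ge)
  then have "1 - \<delta> \<le> prob {\<omega> \<in> space M. \<bar>fid - F_est out N \<omega>\<bar> \<le> bias + \<epsilon>}"
    using gap assms(7,9,10) by (intro sample_mean_confidence[OF assms(12) bounded _ mean]) auto
  moreover have "bias \<le> 2 / n"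
    unfolding bias_def using thermal_bias_le \<open>0 < \<beta>\<close> assms(2) by simp
  moreover have "AE \<omega> in M. convergent (\<lambda>N. F_est out N \<omega>) \<and> lim (\<lambda>N. F_est out N \<omega>) \<le> fid"
    using sample_mean_AE_LIMSEQ[OF assms(12) bounded _ mean]
    by (rule eventually_mono) (use gap in \<open>auto simp: convergent_def limI\<close>)
  ultimately show ?thesis
    unfolding Let_def fidelity_thermal_state[OF assms(4)] \<beta>_def[symmetric]
      N_def[symmetric] fid_def[symmetric] bias_def[symmetric]
    by (simp flip: of_real_diff)
qed

end
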